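(* Let $\mathcal M_1,\mathcal M_2,\dots$ be LMCs $\mathcal M_i=(S,L,\tau_i,\ell)$ sharing the state set, label set and labelling. Suppose that for each $s\in S$ there is a finite set $N(s)\subseteq S$ with $\mathrm{support}(\tau_i(s))\subseteq N(s)$ for all $i$. Let $S_0\subseteq S$ be finite with $\liminf_{i\to\infty}\max\{d_{\mathcal M_i}(s,t):s,t\in S_0\}=0$, and put $N=\bigcup_{s\in S_0}N(s)$. Then there exist a function $\tau:S_0\to\mathrm{Distr}(S)$, a partition $\{S_1,\dots,S_k\}$ of $N$, and a distribution $\mu$ on $\{1,\dots,k\}$ such that $\tau(s)(S_j)=\mu(j)$ for all $s\in S_0$ and $1\le j\le k$, and \[\liminf_{i\to\infty}\max\Big(\{|\tau_i(s)-\tau(s)|:s\in S_0\}\cup\{|\tau_i(s)(S_j)-\mu(j)|:s\in S_0,1\le j\le k\}\cup\{d_{\mathcal M_i}(u,v):1\le j\le k,\ u,v\in S_j\}\Big)=0.\]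
   Context: An LMC $(S,L,\tau,\ell)$ has a nonempty countable state set $S$, finite label set $L$, finitely-branching transition function $\tau:S\to\mathrm{Distr}(S)$ and labelling $\ell:S\to L$. Its probabilistic bisimilarity distance $d$ is the least fixed point of $\Delta(e)(s,t)=1$ if $\ell(s)\ne\ell(t)$, and $\Delta(e)(s,t)=\min_{\omega}\sum_{u,v}\omega(u,v)e(u,v)$ otherwise, the minimum over couplings $\omega\in\mathrm{Distr}(S\times S)$ with marginals $\tau(s)$ and $\tau(t)$. For finitely supported real vectors, $|\cdot|$ denotes the $L_1$ norm, so $|\tau_i(s)-\tau(s)|=\sum_{x\in S}|\tau_i(s)(x)-\tau(s)(x)|$; $\tau(s)(E)=\sum_{x\in E}\tau(s)(x)$. *)

theory Defs
  imports "HOL-Probability.Probability"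
begin

definition couplings :: "'a pmf \<Rightarrow> 'b pmf \<Rightarrow> ('a \<times> 'b) pmf set" where
  "couplings p q = {\<omega>. map_pmf fst \<omega> = p \<and> map_pmf snd \<omega> = q}"

definition Delta :: "('a \<Rightarrow> 'a pmf) \<Rightarrow> ('a \<Rightarrow> 'l) \<Rightarrow> ('a \<Rightarrow> 'a \<Rightarrow> real) \<Rightarrow> 'a \<Rightarrow> 'a \<Rightarrow> real" where
  "Delta tau lab e s t =
     (if lab s \<noteq> lab t then 1
      else (INF \<omega> \<in> couplings (tau s) (tau t). measure_pmf.expectation \<omega> (\<lambda>(u, v). e u v)))"

text \<open>Probabilistic bisimilarity distance: the least fixed point of Delta on the complete
  lattice of [0,1]-valued functions, written (Knaster--Tarski) as the pointwise infimum of
  the prefixed points.\<close>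
definition bisim_dist :: "('a \<Rightarrow> 'a pmf) \<Rightarrow> ('a \<Rightarrow> 'l) \<Rightarrow> 'a \<Rightarrow> 'a \<Rightarrow> real" where
  "bisim_dist tau lab s t =
     (INF e \<in> {e. (\<forall>u v. 0 \<le> e u v \<and> e u v \<le> 1) \<and> (\<forall>u v. Delta tau lab e u v \<le> e u v)}. e s t)"

definition l1_dist :: "'a pmf \<Rightarrow> 'a pmf \<Rightarrow> real" where
  "l1_dist p q = (\<Sum>\<^sub>\<infinity>x. \<bar>pmf p x - pmf q x\<bar>)"

end

theory Submission
  imports Defs
begin

text \<open>
  Pass to a subsequence along which the diameter of \<open>S\<^sub>0\<close> tends to 0 and, by compactness,
  all the finitely many bounded quantities \<open>\<tau>\<^sub>i(s)(x)\<close> (\<open>s \<in> S\<^sub>0\<close>, \<open>x \<in> N\<close>) and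
  \<open>d\<^sub>i(u, v)\<close> (\<open>u, v \<in> N\<close>) converge. The limits of the \<open>\<tau>\<^sub>i(s)\<close> are the distributions
  \<open>\<tau>(s)\<close>, and the limit of the distances, a pseudometric on \<open>N\<close> because each \<open>d\<^sub>i\<close> is one,
  has zero classes \<open>S\<^sub>1, \<dots>, S\<^sub>k\<close>. For \<open>s, t \<in> S\<^sub>0\<close> a nearly optimal coupling of
  \<open>\<tau>\<^sub>i(s)\<close> and \<open>\<tau>\<^sub>i(t)\<close> has expected distance close to \<open>d\<^sub>i(s, t) \<rightarrow> 0\<close>, whereas pairs
  separated by a class are eventually at distance bounded away from 0; so the coupling rarely
  separates a class, and \<open>\<tau>(s)(S\<^sub>j)\<close> does not depend on \<open>s\<close>. Along the subsequence every
  quantity in the maximum tends to 0, hence so does the liminf.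
\<close>

section \<open>Couplings\<close>

lemma set_pmf_coupling: "\<omega> \<in> couplings p q \<Longrightarrow> set_pmf \<omega> \<subseteq> set_pmf p \<times> set_pmf q"
  unfolding couplings_def by force

lemma pair_pmf_in_couplings: "pair_pmf p q \<in> couplings p q"
  by (simp add: couplings_def map_fst_pair_pmf map_snd_pair_pmf)

lemma couplings_nonempty: "couplings p q \<noteq> {}"
  using pair_pmf_in_couplings by blast

lemma swap_in_couplings: "\<omega> \<in> couplings p q \<Longrightarrow> map_pmf prod.swap \<omega> \<in> couplings q p"
  by (simp add: couplings_def map_pmf_comp)

lemma couplings_swap: "couplings q p = map_pmf prod.swap ` couplings p q"
proof
  show "couplings q p \<subseteq> map_pmf prod.swap ` couplings p q"
    using swap_in_couplings[of _ q p] by (force simp: map_pmf_comp)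
qed (use swap_in_couplings in blast)

lemma exists_pmf_glue:
  fixes pq :: "('a \<times> 'b) pmf" and qr :: "('b \<times> 'c) pmf"
  assumes q: "map_pmf snd pq = map_pmf fst qr"
  shows "\<exists>\<nu>. map_pmf (\<lambda>(x, y, z). (x, y)) \<nu> = pq \<and> map_pmf (\<lambda>(x, y, z). (y, z)) \<nu> = qr"
proof -
  let ?cond = "\<lambda>y. cond_pmf qr {yz. fst yz = y}"
  define \<nu> where "\<nu> = bind_pmf pq (\<lambda>xy. map_pmf (\<lambda>yz. (fst xy, snd xy, snd yz)) (?cond (snd xy)))"
  have fst_part: "map_pmf (\<lambda>(x, y, z). (x, y)) \<nu> = pq"
    unfolding \<nu>_def by (simp add: map_bind_pmf map_pmf_comp split_beta map_pmf_def[symmetric])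
  have "map_pmf (\<lambda>(x, y, z). (y, z)) \<nu> = bind_pmf pq (\<lambda>xy. ?cond (snd xy))"
    unfolding \<nu>_def map_bind_pmf
  proof (rule bind_pmf_cong[OF refl])
    fix xy assume "xy \<in> set_pmf pq"
    then have "set_pmf qr \<inter> {yz. fst yz = snd xy} \<noteq> {}"
      using arg_cong[OF q, of set_pmf] by force
    then have "\<forall>yz \<in> set_pmf (?cond (snd xy)). (snd xy, snd yz) = yz"
      by (auto simp: set_cond_pmf)
    then show "map_pmf (\<lambda>(x, y, z). (y, z)) (map_pmf (\<lambda>yz. (fst xy, snd xy, snd yz)) (?cond (snd xy)))
        = ?cond (snd xy)"
      by (simp add: map_pmf_comp map_pmf_idI)
  qed
  also have "\<dots> = bind_pmf (map_pmf fst qr) ?cond"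
    by (simp add: bind_map_pmf flip: q)
  also have "\<dots> = qr"
    by (rule bind_cond_pmf_cancel) (auto simp: eq_commute vimage_def)
  finally show ?thesis using fst_part by blast
qed

lemma integrable_measure_pmf_bounded:
  fixes f :: "'a \<Rightarrow> real"
  shows "(\<And>x. \<bar>f x\<bar> \<le> B) \<Longrightarrow> integrable (measure_pmf p) f"
  by (rule measure_pmf.integrable_const_bound[where B = B]) auto

lemma expectation_le_1:
  fixes f :: "'a \<Rightarrow> real"
  assumes "\<And>x. f x \<le> 1"
  shows "measure_pmf.expectation p f \<le> 1"
proof (cases "integrable p f")
  case True
  then have "measure_pmf.expectation p f \<le> measure_pmf.expectation p (\<lambda>_. 1)"
    using assms by (intro integral_mono) auto
  then show ?thesis by simp
qed (simp add: not_integrable_integral_eq)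

lemma exists_coupling_compose_expectation_le:
  fixes f :: "'a \<Rightarrow> 'b \<Rightarrow> real" and g :: "'b \<Rightarrow> 'c \<Rightarrow> real" and h :: "'a \<Rightarrow> 'c \<Rightarrow> real"
  assumes \<omega>1: "\<omega>1 \<in> couplings p q" and \<omega>2: "\<omega>2 \<in> couplings q r"
    and f: "\<And>x y. \<bar>f x y\<bar> \<le> B" and g: "\<And>y z. \<bar>g y z\<bar> \<le> B" and h: "\<And>x z. \<bar>h x z\<bar> \<le> B"
    and h_le: "\<And>x y z. h x z \<le> f x y + g y z"
  shows "\<exists>\<omega>\<in>couplings p r. measure_pmf.expectation \<omega> (\<lambda>(x, z). h x z)
           \<le> measure_pmf.expectation \<omega>1 (\<lambda>(x, y). f x y) + measure_pmf.expectation \<omega>2 (\<lambda>(y, z). g y z)"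
proof -
  have "map_pmf snd \<omega>1 = map_pmf fst \<omega>2" using \<omega>1 \<omega>2 by (simp add: couplings_def)
  then obtain \<nu> where \<nu>1: "map_pmf (\<lambda>(x, y, z). (x, y)) \<nu> = \<omega>1"
      and \<nu>2: "map_pmf (\<lambda>(x, y, z). (y, z)) \<nu> = \<omega>2"
    using exists_pmf_glue by blast
  define \<omega> where "\<omega> = map_pmf (\<lambda>(x, y, z). (x, z)) \<nu>"
  have coupling: "\<omega> \<in> couplings p r"
    using \<omega>1 \<omega>2 unfolding \<omega>_def couplings_def \<nu>1[symmetric] \<nu>2[symmetric]
    by (simp add: map_pmf_comp split_beta)
  have int_f: "integrable \<nu> (\<lambda>(x, y, z). f x y)" and int_g: "integrable \<nu> (\<lambda>(x, y, z). g y z)"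
    and int_h: "integrable \<nu> (\<lambda>(x, y, z). h x z)"
    by (auto intro!: integrable_measure_pmf_bounded[where B = B] simp: f g h split: prod.splits)
  have "measure_pmf.expectation \<omega> (\<lambda>(x, z). h x z) = measure_pmf.expectation \<nu> (\<lambda>(x, y, z). h x z)"
    unfolding \<omega>_def by (simp add: case_prod_unfold)
  also have "\<dots> \<le> measure_pmf.expectation \<nu> (\<lambda>(x, y, z). f x y + g y z)"
    using Bochner_Integration.integrable_add[OF int_f int_g] int_h h_le
    by (intro integral_mono) (auto simp: case_prod_unfold)
  also have "\<dots> = measure_pmf.expectation \<nu> (\<lambda>(x, y, z). f x y) + measure_pmf.expectation \<nu> (\<lambda>(x, y, z). g y z)"
    using int_f int_g by (simp add: case_prod_unfold)
  also have "\<dots> = measure_pmf.expectation \<omega>1 (\<lambda>(x, y). f x y) + measure_pmf.expectation \<omega>2 (\<lambda>(y, z). g y z)"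
    unfolding \<nu>1[symmetric] \<nu>2[symmetric] by (simp add: case_prod_unfold)
  finally show ?thesis using coupling by blast
qed

lemma prob_diff_le_expectation_coupling:
  fixes d :: "'a \<Rightarrow> 'a \<Rightarrow> real"
  assumes \<omega>: "\<omega> \<in> couplings p q" and "\<delta> > 0"
    and d_bounded: "\<And>u v. 0 \<le> d u v \<and> d u v \<le> B"
    and d_large: "\<And>u v. (u, v) \<in> set_pmf \<omega> \<Longrightarrow> (u \<in> c) \<noteq> (v \<in> c) \<Longrightarrow> \<delta> \<le> d u v"
  shows "\<bar>measure p c - measure q c\<bar> \<le> measure_pmf.expectation \<omega> (\<lambda>(u, v). d u v) / \<delta>"
proof -
  let ?jump = "\<lambda>(u, v). indicator c u - indicator c v :: real"
  have int_d: "integrable \<omega> (\<lambda>(u, v). d u v / \<delta>)"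
    by (rule integrable_measure_pmf_bounded[where B = "B / \<delta>"])
      (use d_bounded \<open>\<delta> > 0\<close> in \<open>auto simp: divide_right_mono split: prod.splits\<close>)
  have int_jump: "integrable \<omega> ?jump"
    by (rule integrable_measure_pmf_bounded[where B = 1]) (auto split: prod.splits split_indicator)
  have "measure (map_pmf h \<omega>) c = measure_pmf.expectation \<omega> (\<lambda>x. indicator c (h x))" for h
    by (simp flip: integral_map_pmf)
  then have "measure p c - measure q c = measure_pmf.expectation \<omega> ?jump"
    using \<omega> unfolding couplings_def
    by (auto simp: case_prod_unfold
        intro!: Bochner_Integration.integral_diff[symmetric] integrable_measure_pmf_bounded[where B = 1])
  also have "\<bar>\<dots>\<bar> \<le> measure_pmf.expectation \<omega> (\<lambda>x. \<bar>?jump x\<bar>)"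
    by (rule integral_abs_bound)
  also have "\<dots> \<le> measure_pmf.expectation \<omega> (\<lambda>(u, v). d u v / \<delta>)"
  proof (rule integral_mono_AE)
    show "AE x in \<omega>. \<bar>?jump x\<bar> \<le> (\<lambda>(u, v). d u v / \<delta>) x"
      using d_large d_bounded \<open>\<delta> > 0\<close>
      by (auto simp: AE_measure_pmf_iff split: split_indicator)
  qed (use int_jump int_d in auto)
  finally show ?thesis by (simp add: case_prod_unfold)
qed

section \<open>The bisimilarity distance\<close>

lemma Delta_le_coupling:
  assumes "lab s = lab t" and "\<omega> \<in> couplings (tau s) (tau t)" and "\<And>u v. 0 \<le> e u v"
  shows "Delta tau lab e s t \<le> measure_pmf.expectation \<omega> (\<lambda>(u, v). e u v)"
  unfolding Delta_def using assms
  by (auto intro!: cINF_lower bdd_belowI2[where m = 0] Bochner_Integration.integral_nonneg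
      split: prod.splits)

lemma Delta_le_1:
  assumes "\<And>u v. 0 \<le> e u v" and "\<And>u v. e u v \<le> 1"
  shows "Delta tau lab e s t \<le> 1"
proof (cases "lab s = lab t")
  case True
  then have "Delta tau lab e s t \<le> measure_pmf.expectation (pair_pmf (tau s) (tau t)) (\<lambda>(u, v). e u v)"
    using assms(1) by (intro Delta_le_coupling pair_pmf_in_couplings)
  also have "\<dots> \<le> 1"
    using assms(2) by (intro expectation_le_1) (auto split: prod.splits)
  finally show ?thesis .
qed (simp add: Delta_def)

lemma Delta_mono:
  assumes "\<And>u v. 0 \<le> e u v" and "\<And>u v. e u v \<le> e' u v" and "\<And>u v. e' u v \<le> 1"
  shows "Delta tau lab e s t \<le> Delta tau lab e' s t"
proof (cases "lab s = lab t")
  case True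
  have "(INF \<omega> \<in> couplings (tau s) (tau t). measure_pmf.expectation \<omega> (\<lambda>(u, v). e u v))
      \<le> (INF \<omega> \<in> couplings (tau s) (tau t). measure_pmf.expectation \<omega> (\<lambda>(u, v). e' u v))"
  proof (rule cINF_mono)
    fix \<omega> assume "\<omega> \<in> couplings (tau s) (tau t)"
    moreover have "measure_pmf.expectation \<omega> (\<lambda>(u, v). e u v) \<le> measure_pmf.expectation \<omega> (\<lambda>(u, v). e' u v)"
      using assms order_trans[OF assms(2,3)] order_trans[OF assms(1,2)]
      by (intro integral_mono integrable_measure_pmf_bounded[where B = 1]) (auto split: prod.splits)
    ultimately show "\<exists>\<omega>'\<in>couplings (tau s) (tau t).
        measure_pmf.expectation \<omega>' (\<lambda>(u, v). e u v) \<le> measure_pmf.expectation \<omega> (\<lambda>(u, v). e' u v)"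
      by blast
  qed (use couplings_nonempty assms(1) in
        \<open>auto intro!: bdd_belowI2[where m = 0] Bochner_Integration.integral_nonneg split: prod.splits\<close>)
  then show ?thesis using True by (simp add: Delta_def)
qed (simp add: Delta_def)

lemma Delta_swap: "Delta tau lab (\<lambda>u v. e v u) s t = Delta tau lab e t s"
proof -
  have "measure_pmf.expectation (map_pmf prod.swap \<omega>) (\<lambda>(u, v). e u v)
      = measure_pmf.expectation \<omega> (\<lambda>(u, v). e v u)" for \<omega>
    by (simp add: case_prod_unfold)
  then show ?thesis
    unfolding Delta_def couplings_swap[of "tau s" "tau t"] image_image by (simp add: eq_commute)
qed

definition Delta_prefixed :: "('a \<Rightarrow> 'a pmf) \<Rightarrow> ('a \<Rightarrow> 'l) \<Rightarrow> ('a \<Rightarrow> 'a \<Rightarrow> real) set" where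
  "Delta_prefixed tau lab =
     {e. (\<forall>u v. 0 \<le> e u v \<and> e u v \<le> 1) \<and> (\<forall>u v. Delta tau lab e u v \<le> e u v)}"

lemma one_in_Delta_prefixed: "(\<lambda>u v. 1) \<in> Delta_prefixed tau lab"
  by (simp add: Delta_prefixed_def Delta_le_1)

lemma bisim_dist_le_prefixed:
  assumes "e \<in> Delta_prefixed tau lab"
  shows "bisim_dist tau lab s t \<le> e s t"
  unfolding bisim_dist_def Delta_prefixed_def[symmetric] using assms
  by (intro cINF_lower bdd_belowI2[where m = 0]) (auto simp: Delta_prefixed_def)

lemma bisim_dist_nonneg: "0 \<le> bisim_dist tau lab s t"
  unfolding bisim_dist_def Delta_prefixed_def[symmetric]
proof (rule cINF_greatest)
  show "Delta_prefixed tau lab \<noteq> {}" using one_in_Delta_prefixed by blast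
qed (simp add: Delta_prefixed_def)

lemma bisim_dist_le_1: "bisim_dist tau lab s t \<le> 1"
  using bisim_dist_le_prefixed[OF one_in_Delta_prefixed, of tau lab s t] by simp

lemma Delta_bisim_dist_le: "Delta tau lab (bisim_dist tau lab) s t \<le> bisim_dist tau lab s t"
  unfolding bisim_dist_def[of tau lab s t] Delta_prefixed_def[symmetric]
proof (rule cINF_greatest)
  fix e assume e: "e \<in> Delta_prefixed tau lab"
  then have "Delta tau lab (bisim_dist tau lab) s t \<le> Delta tau lab e s t"
    by (intro Delta_mono bisim_dist_nonneg bisim_dist_le_prefixed) (auto simp: Delta_prefixed_def)
  also have "\<dots> \<le> e s t" using e by (simp add: Delta_prefixed_def)
  finally show "Delta tau lab (bisim_dist tau lab) s t \<le> e s t" .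
qed (use one_in_Delta_prefixed in blast)

lemma bisim_dist_diff_lab: "lab s \<noteq> lab t \<Longrightarrow> bisim_dist tau lab s t = 1"
  using Delta_bisim_dist_le[of tau lab s t] bisim_dist_le_1[of tau lab s t] by (simp add: Delta_def)

lemma exists_coupling_bisim_dist_le:
  assumes "\<epsilon> > 0"
  shows "\<exists>\<omega>\<in>couplings (tau s) (tau t).
           measure_pmf.expectation \<omega> (\<lambda>(u, v). bisim_dist tau lab u v) \<le> bisim_dist tau lab s t + \<epsilon>"
proof (cases "lab s = lab t")
  case True
  let ?E = "\<lambda>\<omega>. measure_pmf.expectation \<omega> (\<lambda>(u, v). bisim_dist tau lab u v)"
  have "(INF \<omega> \<in> couplings (tau s) (tau t). ?E \<omega>) < bisim_dist tau lab s t + \<epsilon>"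
    using Delta_bisim_dist_le[of tau lab s t] True assms by (simp add: Delta_def)
  then show ?thesis
    using couplings_nonempty bisim_dist_nonneg
    by (subst (asm) cINF_less_iff)
      (auto intro!: bdd_belowI2[where m = 0] Bochner_Integration.integral_nonneg
        split: prod.splits intro: less_imp_le)
next
  case False
  then show ?thesis
    using pair_pmf_in_couplings assms bisim_dist_le_1 bisim_dist_diff_lab[of lab s t tau]
    by (intro bexI[OF _ pair_pmf_in_couplings] order_trans[OF expectation_le_1])
      (auto split: prod.splits)
qed

lemma Delta_le_bisim_dist_add:
  assumes e_nonneg: "\<And>x z. 0 \<le> e x z" and e_le_1: "\<And>x z. e x z \<le> 1"
    and e_le: "\<And>x y z. e x z \<le> bisim_dist tau lab x y + bisim_dist tau lab y z"
  shows "Delta tau lab e x z \<le> bisim_dist tau lab x y + bisim_dist tau lab y z"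
proof (cases "lab x = lab z")
  case False
  then have "lab x \<noteq> lab y \<or> lab y \<noteq> lab z" by auto
  then have "1 \<le> bisim_dist tau lab x y + bisim_dist tau lab y z"
    using bisim_dist_diff_lab bisim_dist_nonneg by (metis add.commute le_add_same_cancel1)
  then show ?thesis using False by (simp add: Delta_def)
next
  case True
  let ?d = "bisim_dist tau lab"
  have e_abs: "\<bar>e x z\<bar> \<le> 1" and d_abs: "\<bar>?d x z\<bar> \<le> 1" for x z
    using e_nonneg[of x z] e_le_1[of x z] bisim_dist_nonneg[of tau lab x z] bisim_dist_le_1[of tau lab x z]
    by auto
  show ?thesis
  proof (rule field_le_epsilon)
    fix \<epsilon> :: real assume "0 < \<epsilon>"
    then obtain \<omega>1 \<omega>2 where \<omega>1: "\<omega>1 \<in> couplings (tau x) (tau y)"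
        "measure_pmf.expectation \<omega>1 (\<lambda>(a, b). ?d a b) \<le> ?d x y + \<epsilon> / 2"
      and \<omega>2: "\<omega>2 \<in> couplings (tau y) (tau z)"
        "measure_pmf.expectation \<omega>2 (\<lambda>(b, c). ?d b c) \<le> ?d y z + \<epsilon> / 2"
      using exists_coupling_bisim_dist_le[of "\<epsilon> / 2"] by (meson half_gt_zero)
    obtain \<omega> where "\<omega> \<in> couplings (tau x) (tau z)"
      and \<omega>: "measure_pmf.expectation \<omega> (\<lambda>(a, c). e a c)
             \<le> measure_pmf.expectation \<omega>1 (\<lambda>(a, b). ?d a b) + measure_pmf.expectation \<omega>2 (\<lambda>(b, c). ?d b c)"
      using exists_coupling_compose_expectation_le[OF \<omega>1(1) \<omega>2(1)] d_abs e_abs e_le by meson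
    then have "Delta tau lab e x z \<le> measure_pmf.expectation \<omega> (\<lambda>(a, c). e a c)"
      using True e_nonneg by (intro Delta_le_coupling)
    then show "Delta tau lab e x z \<le> ?d x y + ?d y z + \<epsilon>"
      using \<omega> \<omega>1(2) \<omega>2(2) by linarith
  qed
qed

text \<open>Minimising over the intermediate state yields a prefixed point of \<open>Delta\<close>.\<close>

lemma bisim_dist_triangle: "bisim_dist tau lab u w \<le> bisim_dist tau lab u v + bisim_dist tau lab v w"
proof -
  let ?d = "bisim_dist tau lab"
  define e where "e x z = min 1 (INF y. ?d x y + ?d y z)" for x z
  have bdd: "bdd_below (range (\<lambda>y. ?d x y + ?d y z))" for x z
    by (intro bdd_belowI2[where m = 0] add_nonneg_nonneg bisim_dist_nonneg)
  have e_le: "e x z \<le> ?d x y + ?d y z" for x y z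
    unfolding e_def using cINF_lower[OF bdd, of y x z] by (simp add: min.coboundedI2)
  have e_nonneg: "0 \<le> e x z" for x z
    unfolding e_def by (auto intro!: cINF_greatest add_nonneg_nonneg bisim_dist_nonneg)
  have e_le_1: "e x z \<le> 1" for x z
    by (simp add: e_def)
  have "Delta tau lab e x z \<le> e x z" for x z
  proof -
    have "Delta tau lab e x z \<le> (INF y. ?d x y + ?d y z)"
      by (rule cINF_greatest) (auto intro: Delta_le_bisim_dist_add e_nonneg e_le_1 e_le)
    then show ?thesis
      using Delta_le_1[of e, OF e_nonneg e_le_1] by (simp add: e_def)
  qed
  then have "e \<in> Delta_prefixed tau lab"
    using e_nonneg e_le_1 by (simp add: Delta_prefixed_def)
  then have "?d u w \<le> e u w" by (rule bisim_dist_le_prefixed)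
  also have "\<dots> \<le> ?d u v + ?d v w" by (rule e_le)
  finally show ?thesis .
qed

lemma bisim_dist_refl: "bisim_dist tau lab s s = 0"
proof -
  define e where "e x y = (if x = y then 0 else 1 :: real)" for x y :: 'a
  have "Delta tau lab e x y \<le> e x y" for x y
  proof (cases "x = y")
    case True
    have "map_pmf (\<lambda>a. (a, a)) (tau x) \<in> couplings (tau x) (tau x)"
      by (simp add: couplings_def map_pmf_comp)
    then have "Delta tau lab e x x \<le> measure_pmf.expectation (map_pmf (\<lambda>a. (a, a)) (tau x)) (\<lambda>(u, v). e u v)"
      by (intro Delta_le_coupling) (auto simp: e_def)
    then show ?thesis using True by (simp add: e_def)
  qed (simp add: Delta_le_1 e_def)
  then have "e \<in> Delta_prefixed tau lab" by (simp add: Delta_prefixed_def e_def)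
  then show ?thesis
    using bisim_dist_le_prefixed[of e tau lab s s] bisim_dist_nonneg[of tau lab s s] by (simp add: e_def)
qed

lemma bisim_dist_sym: "bisim_dist tau lab s t = bisim_dist tau lab t s"
proof -
  have le: "bisim_dist tau lab s t \<le> bisim_dist tau lab t s" for s t
  proof -
    have "Delta tau lab (\<lambda>u v. bisim_dist tau lab v u) x y \<le> bisim_dist tau lab y x" for x y
      using Delta_swap[of tau lab "bisim_dist tau lab" x y] Delta_bisim_dist_le[of tau lab y x]
      by linarith
    then have "(\<lambda>u v. bisim_dist tau lab v u) \<in> Delta_prefixed tau lab"
      by (simp add: Delta_prefixed_def bisim_dist_nonneg bisim_dist_le_1)
    then show ?thesis by (rule bisim_dist_le_prefixed)
  qed
  show ?thesis using le[of s t] le[of t s] by linarith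
qed

section \<open>Limits of finitely supported distributions\<close>

lemma exists_pmf_of_weights:
  fixes g :: "'a \<Rightarrow> real"
  assumes "finite A" and "\<And>x. 0 \<le> g x" and "\<And>x. x \<notin> A \<Longrightarrow> g x = 0" and "sum g A = 1"
  obtains p where "\<And>x. pmf p x = g x"
proof -
  have "(\<integral>\<^sup>+x. ennreal (g x) \<partial>count_space UNIV) = (\<integral>\<^sup>+x. ennreal (g x) \<partial>count_space A)"
    using assms(3) by (auto simp: nn_integral_count_space_indicator intro!: nn_integral_cong split: split_indicator)
  also have "\<dots> = ennreal (sum g A)"
    using assms(1,2) by (simp add: nn_integral_count_space_finite sum_ennreal)
  finally have "pmf (embed_pmf g) x = g x" for x
    using pmf_embed_pmf[of g] assms(2,4) by simp
  then show ?thesis by (rule that)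
qed

lemma pmf_eq_0_outside: "set_pmf p \<subseteq> N \<Longrightarrow> x \<notin> N \<Longrightarrow> pmf p x = 0"
  by (meson pmf_eq_0_set_pmf subsetD)

lemma measure_pmf_eq_sum:
  assumes "finite N" and "set_pmf p \<subseteq> N"
  shows "measure p A = (\<Sum>x\<in>A \<inter> N. pmf p x)"
proof -
  have "measure p A = measure p (A \<inter> N)"
    using measure_Int_set_pmf[of p A] measure_Int_set_pmf[of p "A \<inter> N"]
    by (simp add: Int_assoc Int_absorb1[OF assms(2)])
  then show ?thesis using assms(1) by (simp add: measure_measure_pmf_finite)
qed

lemma l1_dist_eq_sum:
  assumes "finite N" and "set_pmf p \<subseteq> N" and "set_pmf q \<subseteq> N"
  shows "l1_dist p q = (\<Sum>x\<in>N. \<bar>pmf p x - pmf q x\<bar>)"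
proof -
  have "l1_dist p q = infsum (\<lambda>x. \<bar>pmf p x - pmf q x\<bar>) N"
    unfolding l1_dist_def using assms(2,3)
    by (intro infsum_cong_neutral) (auto simp: pmf_eq_0_outside)
  then show ?thesis using assms(1) by simp
qed

lemma finite_support_pmf_limit:
  fixes p :: "nat \<Rightarrow> 'a pmf"
  assumes "finite N" and supp: "\<And>n. set_pmf (p n) \<subseteq> N"
    and conv: "\<And>x. x \<in> N \<Longrightarrow> convergent (\<lambda>n. pmf (p n) x)"
  obtains q where "set_pmf q \<subseteq> N" and "(\<lambda>n. l1_dist (p n) q) \<longlonglongrightarrow> 0"
    and "\<And>A. (\<lambda>n. measure (p n) A) \<longlonglongrightarrow> measure q A"
proof -
  define g where "g x = (if x \<in> N then lim (\<lambda>n. pmf (p n) x) else 0)" for x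
  have pmf_lim: "(\<lambda>n. pmf (p n) x) \<longlonglongrightarrow> g x" for x
  proof (cases "x \<in> N")
    case False
    then show ?thesis by (simp add: g_def pmf_eq_0_outside[OF supp])
  qed (use conv in \<open>simp add: g_def convergent_LIMSEQ_iff\<close>)
  have "(\<lambda>n. \<Sum>x\<in>N. pmf (p n) x) \<longlonglongrightarrow> (\<Sum>x\<in>N. g x)"
    by (intro tendsto_sum pmf_lim)
  moreover have "(\<Sum>x\<in>N. pmf (p n) x) = 1" for n
    using sum_pmf_eq_1[OF \<open>finite N\<close> supp] .
  ultimately have "sum g N = 1" by (simp add: LIMSEQ_const_iff)
  moreover have "0 \<le> g x" for x
    using pmf_lim by (rule LIMSEQ_le_const) simp
  moreover have "g x = 0" if "x \<notin> N" for x
    using that by (simp add: g_def)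
  ultimately obtain q where q: "\<And>x. pmf q x = g x"
    using exists_pmf_of_weights[OF \<open>finite N\<close>, of g] by blast
  have supp_q: "set_pmf q \<subseteq> N"
    by (auto simp: set_pmf_iff q g_def split: if_splits)
  show ?thesis
  proof (rule that[OF supp_q])
    show "(\<lambda>n. l1_dist (p n) q) \<longlonglongrightarrow> 0"
      using tendsto_sum[of N "\<lambda>x n. \<bar>pmf (p n) x - pmf q x\<bar>" "\<lambda>_. 0"]
        tendsto_rabs_zero[OF LIM_zero[OF pmf_lim]]
      by (simp add: l1_dist_eq_sum[OF \<open>finite N\<close> supp supp_q] q)
    show "(\<lambda>n. measure (p n) A) \<longlonglongrightarrow> measure q A" for A
      unfolding measure_pmf_eq_sum[OF \<open>finite N\<close> supp] measure_pmf_eq_sum[OF \<open>finite N\<close> supp_q] q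
      by (intro tendsto_sum pmf_lim)
  qed
qed

lemma exists_subseq_convergent_family:
  fixes f :: "'b \<Rightarrow> nat \<Rightarrow> real"
  assumes "finite I" and "\<And>i n. i \<in> I \<Longrightarrow> \<bar>f i n\<bar> \<le> B"
  shows "\<exists>r. strict_mono r \<and> (\<forall>i\<in>I. convergent (\<lambda>n. f i (r n)))"
  using assms
proof (induction I rule: finite_induct)
  case empty
  show ?case using strict_mono_id by blast
next
  case (insert i I)
  then obtain r where r: "strict_mono r" "\<forall>i\<in>I. convergent (\<lambda>n. f i (r n))" by auto
  have "bounded (range (\<lambda>n. f i (r n)))"
    using insert.prems by (intro boundedI[where B = B]) auto
  then obtain l r' where r': "strict_mono r'" "((\<lambda>n. f i (r n)) \<circ> r') \<longlonglongrightarrow> l"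
    using bounded_imp_convergent_subsequence by blast
  have "convergent (\<lambda>n. f j (r (r' n)))" if "j \<in> insert i I" for j
    using that r'(2) convergent_subseq_convergent[OF r(2)[rule_format] r'(1)]
    by (auto simp: convergent_def o_def)
  then show ?case using strict_mono_o[OF r(1) r'(1)] by (auto simp: o_def)
qed

lemma coupled_prob_diff_tendsto_0:
  fixes d :: "nat \<Rightarrow> 'a \<Rightarrow> 'a \<Rightarrow> real" and \<omega> :: "nat \<Rightarrow> ('a \<times> 'a) pmf"
  assumes "finite N"
    and \<omega>: "\<And>n. \<omega> n \<in> couplings (p n) (q n)"
    and supp_p: "\<And>n. set_pmf (p n) \<subseteq> N" and supp_q: "\<And>n. set_pmf (q n) \<subseteq> N"
    and d_bounded: "\<And>n u v. 0 \<le> d n u v \<and> d n u v \<le> 1"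
    and d_lim: "\<And>u v. u \<in> N \<Longrightarrow> v \<in> N \<Longrightarrow> (\<lambda>n. d n u v) \<longlonglongrightarrow> D u v"
    and expectation_lim: "(\<lambda>n. measure_pmf.expectation (\<omega> n) (\<lambda>(u, v). d n u v)) \<longlonglongrightarrow> 0"
    and separated: "\<And>u v. u \<in> N \<Longrightarrow> v \<in> N \<Longrightarrow> (u \<in> c) \<noteq> (v \<in> c) \<Longrightarrow> D u v \<noteq> 0"
  shows "(\<lambda>n. measure (p n) c - measure (q n) c) \<longlonglongrightarrow> 0"
proof -
  define cut where "cut = {(u, v) \<in> N \<times> N. (u \<in> c) \<noteq> (v \<in> c)}"
  have "finite cut" using \<open>finite N\<close> by (auto simp: cut_def intro: finite_subset[of _ "N \<times> N"])
  have D_pos: "0 < D u v" if "(u, v) \<in> cut" for u v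
    using that separated LIMSEQ_le_const[OF d_lim, of u v 0] d_bounded
    by (fastforce simp: cut_def order.order_iff_strict)
  define \<delta> where "\<delta> = Min (insert 1 ((\<lambda>(u, v). D u v / 2) ` cut))"
  have "\<delta> > 0" unfolding \<delta>_def using \<open>finite cut\<close> D_pos by auto
  have "\<forall>\<^sub>F n in sequentially. \<forall>(u, v)\<in>cut. \<delta> \<le> d n u v"
  proof (rule eventually_ball_finite[OF \<open>finite cut\<close>], safe)
    fix u v assume uv: "(u, v) \<in> cut"
    have "\<delta> \<le> D u v / 2"
      unfolding \<delta>_def using \<open>finite cut\<close> uv by (intro Min_le) auto
    moreover have "\<forall>\<^sub>F n in sequentially. D u v / 2 < d n u v"
      using D_pos[OF uv] uv by (intro order_tendstoD(1)[OF d_lim]) (auto simp: cut_def)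
    ultimately show "\<forall>\<^sub>F n in sequentially. \<delta> \<le> d n u v"
      by (auto elim: eventually_mono)
  qed
  then have "\<forall>\<^sub>F n in sequentially. norm (measure (p n) c - measure (q n) c)
      \<le> measure_pmf.expectation (\<omega> n) (\<lambda>(u, v). d n u v) / \<delta>"
  proof eventually_elim
    case (elim n)
    have "\<delta> \<le> d n u v" if "(u, v) \<in> set_pmf (\<omega> n)" "(u \<in> c) \<noteq> (v \<in> c)" for u v
    proof -
      have "(u, v) \<in> cut"
        using that set_pmf_coupling[OF \<omega>] supp_p supp_q by (fastforce simp: cut_def)
      then show ?thesis using elim by blast
    qed
    then show ?case
      unfolding real_norm_def by (rule prob_diff_le_expectation_coupling[OF \<omega> \<open>\<delta> > 0\<close> d_bounded])
  qed
  moreover have "(\<lambda>n. measure_pmf.expectation (\<omega> n) (\<lambda>(u, v). d n u v) / \<delta>) \<longlonglongrightarrow> 0"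
    using tendsto_divide_zero[OF expectation_lim] .
  ultimately show ?thesis by (rule Lim_null_comparison)
qed

section \<open>Zero classes of a pseudometric\<close>

lemma equiv_dist_eq_0:
  fixes D :: "'a \<Rightarrow> 'a \<Rightarrow> real"
  assumes refl: "\<And>u. u \<in> A \<Longrightarrow> D u u = 0"
    and sym: "\<And>u v. u \<in> A \<Longrightarrow> v \<in> A \<Longrightarrow> D u v = D v u"
    and triangle: "\<And>u v w. u \<in> A \<Longrightarrow> v \<in> A \<Longrightarrow> w \<in> A \<Longrightarrow> D u w \<le> D u v + D v w"
  shows "equiv A {(u, v) \<in> A \<times> A. D u v = 0}"
proof (rule equivI)
  have nonneg: "0 \<le> D u v" if "u \<in> A" "v \<in> A" for u v
    using triangle[OF that(1,2,1)] refl[OF that(1)] sym[OF that] by linarith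
  show "trans {(u, v) \<in> A \<times> A. D u v = 0}"
  proof (rule transI, safe)
    fix u v w assume "u \<in> A" "v \<in> A" "w \<in> A" "D u v = 0" "D v w = 0"
    then show "D u w = 0" using triangle[of u v w] nonneg[of u w] by simp
  qed
qed (auto intro!: refl_onI symI simp: refl sym)

lemma enumerate_quotient:
  assumes "finite A" and "equiv A R"
  obtains k and P :: "nat \<Rightarrow> 'a set"
  where "P ` {1..k} = A // R"
    and "\<forall>j\<in>{1..k}. P j \<noteq> {}"
    and "\<forall>j\<in>{1..k}. \<forall>j'\<in>{1..k}. j \<noteq> j' \<longrightarrow> P j \<inter> P j' = {}"
    and "(\<Union>j\<in>{1..k}. P j) = A"
proof -
  have "finite (A // R)"
    using finite_quotient[OF assms(1) equiv_type[OF assms(2)]] .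
  then obtain P where P: "bij_betw P {1..card (A // R)} (A // R)"
    using ex_bij_betw_nat_finite_1 by blast
  show ?thesis
  proof (rule that[of P "card (A // R)"])
    show "P ` {1..card (A // R)} = A // R" using P by (simp add: bij_betw_def)
    then show "\<forall>j\<in>{1..card (A // R)}. P j \<noteq> {}"
      using in_quotient_imp_non_empty[OF assms(2)] by blast
    show "\<forall>j\<in>{1..card (A // R)}. \<forall>j'\<in>{1..card (A // R)}. j \<noteq> j' \<longrightarrow> P j \<inter> P j' = {}"
      using P quotient_disj[OF assms(2)] by (metis bij_betw_iff_bijections)
    show "(\<Union>j\<in>{1..card (A // R)}. P j) = A"
      using \<open>P ` _ = A // R\<close> Union_quotient[OF assms(2)] by simp
  qed
qed

lemma exists_pmf_of_blocks:
  assumes disjoint: "\<forall>j\<in>{1..k}. \<forall>j'\<in>{1..k}. j \<noteq> j' \<longrightarrow> P j \<inter> P j' = {}"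
    and supp: "set_pmf q \<subseteq> (\<Union>j\<in>{1..k}. P j)"
  obtains \<mu> where "set_pmf \<mu> \<subseteq> {1..k}" and "\<And>j. j \<in> {1..k} \<Longrightarrow> pmf \<mu> j = measure q (P j)"
proof -
  define block where "block x = (SOME j. j \<in> {1..k} \<and> x \<in> P j)" for x
  have block: "block x \<in> {1..k} \<and> x \<in> P (block x)" if "x \<in> set_pmf q" for x
  proof -
    have "\<exists>j. j \<in> {1..k} \<and> x \<in> P j" using supp that by blast
    then show ?thesis unfolding block_def by (rule someI_ex)
  qed
  show ?thesis
  proof (rule that[of "map_pmf block q"])
    show "set_pmf (map_pmf block q) \<subseteq> {1..k}" using block by force
    fix j assume j: "j \<in> {1..k}"
    have "block x = j \<longleftrightarrow> x \<in> P j" if "x \<in> set_pmf q" for x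
      using block[OF that] disjoint j by blast
    then have "block -` {j} \<inter> set_pmf q = P j \<inter> set_pmf q"
      by blast
    then show "pmf (map_pmf block q) j = measure q (P j)"
      unfolding pmf_map by (metis measure_Int_set_pmf)
  qed
qed

section \<open>Convergent sequences of LMCs\<close>

lemma tendsto_Max_0:
  fixes A :: "nat \<Rightarrow> real set"
  assumes "\<And>n. finite (A n)" and "\<And>n. A n \<noteq> {}" and "\<And>n y. y \<in> A n \<Longrightarrow> 0 \<le> y"
    and small: "\<And>\<epsilon>. 0 < \<epsilon> \<Longrightarrow> \<forall>\<^sub>F n in sequentially. \<forall>y\<in>A n. y < \<epsilon>"
  shows "(\<lambda>n. Max (A n)) \<longlonglongrightarrow> 0"
proof (rule order_tendstoI)
  fix a :: real assume "a < 0"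
  then show "\<forall>\<^sub>F n in sequentially. a < Max (A n)"
    using assms(1-3) by (intro always_eventually allI) (meson Max_in less_le_trans)
next
  fix a :: real assume "0 < a"
  show "\<forall>\<^sub>F n in sequentially. Max (A n) < a"
    using small[OF \<open>0 < a\<close>] by eventually_elim (simp add: assms(1,2))
qed

lemma liminf_eq_0_if_subseq_tendsto_0:
  fixes Y :: "nat \<Rightarrow> real"
  assumes "strict_mono r" and "\<And>i. 0 \<le> Y i" and "(\<lambda>n. Y (r n)) \<longlonglongrightarrow> 0"
  shows "liminf (\<lambda>i. ereal (Y i)) = 0"
proof (rule antisym)
  have "liminf (\<lambda>i. ereal (Y i)) \<le> liminf ((\<lambda>i. ereal (Y i)) \<circ> r)"
    by (rule liminf_subseq_mono[OF assms(1)])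
  also have "\<dots> = 0"
    using assms(3) by (intro lim_imp_Liminf) (simp_all add: o_def zero_ereal_def)
  finally show "liminf (\<lambda>i. ereal (Y i)) \<le> 0" .
  show "0 \<le> liminf (\<lambda>i. ereal (Y i))" using assms(2) by (intro Liminf_bounded) auto
qed

lemma l1_dist_nonneg: "0 \<le> l1_dist p q"
  unfolding l1_dist_def by (intro infsum_nonneg) simp

definition deviation ::
    "('a \<Rightarrow> 'a pmf) \<Rightarrow> ('a \<Rightarrow> 'l) \<Rightarrow> 'a set \<Rightarrow> ('a \<Rightarrow> 'a pmf) \<Rightarrow> nat \<Rightarrow> (nat \<Rightarrow> 'a set) \<Rightarrow> nat pmf \<Rightarrow> real"
  where
  "deviation tau lab S0 \<tau> k P \<mu> = Max (
       ((\<lambda>s. l1_dist (tau s) (\<tau> s)) ` S0)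
     \<union> ((\<lambda>(s, j). \<bar>measure_pmf.prob (tau s) (P j) - pmf \<mu> j\<bar>) ` (S0 \<times> {1..k}))
     \<union> ((\<lambda>(j, u, v). bisim_dist tau lab u v) ` (SIGMA j:{1..k}. P j \<times> P j)))"

lemma deviation_nonneg:
  assumes "finite S0" and "s \<in> S0" and "\<And>j. j \<in> {1..k} \<Longrightarrow> finite (P j)"
  shows "0 \<le> deviation tau lab S0 \<tau> k P \<mu>"
  unfolding deviation_def using assms l1_dist_nonneg[of "tau s" "\<tau> s"]
  by (intro Max.coboundedI[THEN order_trans[rotated]]) (auto intro!: finite_SigmaI)

lemma deviation_tendsto_0:
  fixes tau :: "nat \<Rightarrow> 'a \<Rightarrow> 'a pmf"
  assumes "finite S0" and "S0 \<noteq> {}" and finite_P: "\<And>j. j \<in> {1..k} \<Longrightarrow> finite (P j)"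
    and l1: "\<And>s. s \<in> S0 \<Longrightarrow> (\<lambda>n. l1_dist (tau n s) (\<tau> s)) \<longlonglongrightarrow> 0"
    and blocks: "\<And>s j. s \<in> S0 \<Longrightarrow> j \<in> {1..k} \<Longrightarrow> (\<lambda>n. measure (tau n s) (P j)) \<longlonglongrightarrow> pmf \<mu> j"
    and diam: "\<And>j u v. j \<in> {1..k} \<Longrightarrow> u \<in> P j \<Longrightarrow> v \<in> P j \<Longrightarrow> (\<lambda>n. bisim_dist (tau n) lab u v) \<longlonglongrightarrow> 0"
  shows "(\<lambda>n. deviation (tau n) lab S0 \<tau> k P \<mu>) \<longlonglongrightarrow> 0"
  unfolding deviation_def
proof (rule tendsto_Max_0)
  fix \<epsilon> :: real assume "0 < \<epsilon>"
  have "\<forall>\<^sub>F n in sequentially. \<forall>s\<in>S0. l1_dist (tau n s) (\<tau> s) < \<epsilon>"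
    using \<open>finite S0\<close> by (intro eventually_ball_finite ballI order_tendstoD(2)[OF l1 \<open>0 < \<epsilon>\<close>])
  moreover have "\<forall>\<^sub>F n in sequentially. \<forall>(s, j)\<in>S0 \<times> {1..k}. \<bar>measure (tau n s) (P j) - pmf \<mu> j\<bar> < \<epsilon>"
    using \<open>finite S0\<close> \<open>0 < \<epsilon>\<close>
    by (intro eventually_ball_finite ballI)
      (auto intro!: order_tendstoD(2)[OF tendsto_rabs_zero[OF LIM_zero[OF blocks]]])
  moreover have "\<forall>\<^sub>F n in sequentially. \<forall>(j, u, v)\<in>(SIGMA j:{1..k}. P j \<times> P j). bisim_dist (tau n) lab u v < \<epsilon>"
    using finite_P \<open>0 < \<epsilon>\<close>
    by (intro eventually_ball_finite ballI) (auto intro!: finite_SigmaI order_tendstoD(2)[OF diam])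
  ultimately show "\<forall>\<^sub>F n in sequentially. \<forall>y\<in>
       ((\<lambda>s. l1_dist (tau n s) (\<tau> s)) ` S0)
     \<union> ((\<lambda>(s, j). \<bar>measure_pmf.prob (tau n s) (P j) - pmf \<mu> j\<bar>) ` (S0 \<times> {1..k}))
     \<union> ((\<lambda>(j, u, v). bisim_dist (tau n) lab u v) ` (SIGMA j:{1..k}. P j \<times> P j)). y < \<epsilon>"
    by eventually_elim fast
qed (use assms in \<open>auto intro!: finite_SigmaI l1_dist_nonneg bisim_dist_nonneg\<close>)

locale convergent_lmc_sequence =
  fixes tau :: "nat \<Rightarrow> 'a \<Rightarrow> 'a pmf" and lab :: "'a \<Rightarrow> 'l" and S0 N :: "'a set"
  assumes finite_S0: "finite S0" and finite_N: "finite N"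
    and support: "\<And>n s. s \<in> S0 \<Longrightarrow> set_pmf (tau n s) \<subseteq> N"
    and convergent_pmf: "\<And>s x. s \<in> S0 \<Longrightarrow> x \<in> N \<Longrightarrow> convergent (\<lambda>n. pmf (tau n s) x)"
    and convergent_dist: "\<And>u v. u \<in> N \<Longrightarrow> v \<in> N \<Longrightarrow> convergent (\<lambda>n. bisim_dist (tau n) lab u v)"
    and dist_S0_tendsto_0: "\<And>s t. s \<in> S0 \<Longrightarrow> t \<in> S0 \<Longrightarrow> (\<lambda>n. bisim_dist (tau n) lab s t) \<longlonglongrightarrow> 0"
begin

definition lim_dist :: "'a \<Rightarrow> 'a \<Rightarrow> real" where
  "lim_dist u v = lim (\<lambda>n. bisim_dist (tau n) lab u v)"

definition lim_equiv :: "('a \<times> 'a) set" where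
  "lim_equiv = {(u, v) \<in> N \<times> N. lim_dist u v = 0}"

lemma tendsto_lim_dist: "u \<in> N \<Longrightarrow> v \<in> N \<Longrightarrow> (\<lambda>n. bisim_dist (tau n) lab u v) \<longlonglongrightarrow> lim_dist u v"
  unfolding lim_dist_def using convergent_dist by (simp add: convergent_LIMSEQ_iff)

lemma equiv_lim_equiv: "equiv N lim_equiv"
  unfolding lim_equiv_def
proof (rule equiv_dist_eq_0)
  show "lim_dist u u = 0" if "u \<in> N" for u
    using tendsto_lim_dist[OF that that] by (simp add: bisim_dist_refl LIMSEQ_const_iff)
  show "lim_dist u v = lim_dist v u" if "u \<in> N" "v \<in> N" for u v
    using tendsto_lim_dist[OF that] tendsto_lim_dist[OF that(2,1)]
    by (simp add: bisim_dist_sym[of _ lab u v] LIMSEQ_unique)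
  show "lim_dist u w \<le> lim_dist u v + lim_dist v w" if "u \<in> N" "v \<in> N" "w \<in> N" for u v w
    using tendsto_lim_dist[OF that(1,3)] tendsto_add[OF tendsto_lim_dist[OF that(1,2)] tendsto_lim_dist[OF that(2,3)]]
    by (rule LIMSEQ_le) (auto intro: bisim_dist_triangle)
qed

lemma prob_class_diff_tendsto_0:
  assumes s: "s \<in> S0" and t: "t \<in> S0" and c: "c \<in> N // lim_equiv"
  shows "(\<lambda>n. measure (tau n s) c - measure (tau n t) c) \<longlonglongrightarrow> 0"
proof -
  let ?E = "\<lambda>n \<omega>. measure_pmf.expectation \<omega> (\<lambda>(u, v). bisim_dist (tau n) lab u v)"
  have "\<forall>n. \<exists>\<omega>. \<omega> \<in> couplings (tau n s) (tau n t)
      \<and> ?E n \<omega> \<le> bisim_dist (tau n) lab s t + inverse (Suc n)"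
  proof
    fix n
    show "\<exists>\<omega>. \<omega> \<in> couplings (tau n s) (tau n t) \<and> ?E n \<omega> \<le> bisim_dist (tau n) lab s t + inverse (Suc n)"
      using exists_coupling_bisim_dist_le[of "inverse (Suc n)" "tau n" s t lab] by auto
  qed
  then obtain \<omega> where \<omega>: "\<And>n. \<omega> n \<in> couplings (tau n s) (tau n t)"
    and E_le: "\<And>n. ?E n (\<omega> n) \<le> bisim_dist (tau n) lab s t + inverse (Suc n)"
    using choice[of "\<lambda>n \<omega>. \<omega> \<in> couplings (tau n s) (tau n t) \<and> ?E n \<omega> \<le> bisim_dist (tau n) lab s t + inverse (Suc n)"]
    by blast
  have "(\<lambda>n. ?E n (\<omega> n)) \<longlonglongrightarrow> 0"
  proof (rule tendsto_sandwich[OF always_eventually always_eventually])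
    show "\<forall>n. 0 \<le> ?E n (\<omega> n)"
      by (auto intro!: Bochner_Integration.integral_nonneg bisim_dist_nonneg split: prod.splits)
    show "\<forall>n. ?E n (\<omega> n) \<le> bisim_dist (tau n) lab s t + inverse (Suc n)" using E_le by blast
    show "(\<lambda>n. bisim_dist (tau n) lab s t + inverse (Suc n)) \<longlonglongrightarrow> 0"
      using tendsto_add[OF dist_S0_tendsto_0[OF s t] LIMSEQ_inverse_real_of_nat] by simp
  qed simp
  moreover have "lim_dist u v \<noteq> 0" if "u \<in> N" "v \<in> N" "(u \<in> c) \<noteq> (v \<in> c)" for u v
  proof
    assume "lim_dist u v = 0"
    then have "(u, v) \<in> lim_equiv" "(v, u) \<in> lim_equiv"
      using that equiv_lim_equiv by (auto simp: lim_equiv_def elim: equivE symE)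
    then show False
      using that in_quotient_imp_closed[OF equiv_lim_equiv c] by blast
  qed
  ultimately show ?thesis
    using support s t
    by (intro coupled_prob_diff_tendsto_0[OF finite_N \<omega> _ _ _ tendsto_lim_dist])
      (auto simp: bisim_dist_nonneg bisim_dist_le_1)
qed

lemma limit_prob_class_eq:
  assumes lim: "\<And>s A. s \<in> S0 \<Longrightarrow> (\<lambda>n. measure (tau n s) A) \<longlonglongrightarrow> measure (\<tau> s) A"
    and "s \<in> S0" and "t \<in> S0" and "c \<in> N // lim_equiv"
  shows "measure (\<tau> s) c = measure (\<tau> t) c"
proof -
  have "(\<lambda>n. measure (tau n s) c - measure (tau n t) c) \<longlonglongrightarrow> measure (\<tau> s) c - measure (\<tau> t) c"
    using assms by (intro tendsto_diff lim)
  then show ?thesis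
    using LIMSEQ_unique prob_class_diff_tendsto_0[OF assms(2-4)] by fastforce
qed

lemma tendsto_dist_in_class:
  assumes "c \<in> N // lim_equiv" and "u \<in> c" and "v \<in> c"
  shows "(\<lambda>n. bisim_dist (tau n) lab u v) \<longlonglongrightarrow> 0"
proof -
  have "(u, v) \<in> lim_equiv"
    using assms by (intro in_quotient_imp_in_rel[OF equiv_lim_equiv]) auto
  then show ?thesis using tendsto_lim_dist[of u v] by (simp add: lim_equiv_def)
qed

lemma exists_limit_pmfs:
  obtains \<tau> :: "'a \<Rightarrow> 'a pmf"
  where "\<And>s. s \<in> S0 \<Longrightarrow> set_pmf (\<tau> s) \<subseteq> N"
    and "\<And>s. s \<in> S0 \<Longrightarrow> (\<lambda>n. l1_dist (tau n s) (\<tau> s)) \<longlonglongrightarrow> 0"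
    and "\<And>s A. s \<in> S0 \<Longrightarrow> (\<lambda>n. measure (tau n s) A) \<longlonglongrightarrow> measure (\<tau> s) A"
proof -
  have limits: "\<forall>s\<in>S0. \<exists>q. set_pmf q \<subseteq> N \<and> (\<lambda>n. l1_dist (tau n s) q) \<longlonglongrightarrow> 0
      \<and> (\<forall>A. (\<lambda>n. measure (tau n s) A) \<longlonglongrightarrow> measure q A)"
  proof
    fix s assume s: "s \<in> S0"
    obtain q where "set_pmf q \<subseteq> N" "(\<lambda>n. l1_dist (tau n s) q) \<longlonglongrightarrow> 0"
      "\<And>A. (\<lambda>n. measure (tau n s) A) \<longlonglongrightarrow> measure q A"
      using finite_support_pmf_limit[OF finite_N support[OF s] convergent_pmf[OF s]] by blast
    then show "\<exists>q. set_pmf q \<subseteq> N \<and> (\<lambda>n. l1_dist (tau n s) q) \<longlonglongrightarrow> 0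
      \<and> (\<forall>A. (\<lambda>n. measure (tau n s) A) \<longlonglongrightarrow> measure q A)" by blast
  qed
  from bchoice[OF limits] obtain \<tau> where \<tau>: "\<forall>s\<in>S0. set_pmf (\<tau> s) \<subseteq> N
      \<and> (\<lambda>n. l1_dist (tau n s) (\<tau> s)) \<longlonglongrightarrow> 0 \<and> (\<forall>A. (\<lambda>n. measure (tau n s) A) \<longlonglongrightarrow> measure (\<tau> s) A)" ..
  then show ?thesis by (intro that) auto
qed

theorem exists_limit_partition:
  assumes "S0 \<noteq> {}"
  shows "\<exists>(\<tau> :: 'a \<Rightarrow> 'a pmf) k (P :: nat \<Rightarrow> 'a set) (\<mu> :: nat pmf).
           (\<forall>j\<in>{1..k}. P j \<noteq> {}) \<and>
           (\<forall>j\<in>{1..k}. \<forall>j'\<in>{1..k}. j \<noteq> j' \<longrightarrow> P j \<inter> P j' = {}) \<and>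
           (\<Union>j\<in>{1..k}. P j) = N \<and>
           set_pmf \<mu> \<subseteq> {1..k} \<and>
           (\<forall>s\<in>S0. \<forall>j\<in>{1..k}. measure_pmf.prob (\<tau> s) (P j) = pmf \<mu> j) \<and>
           (\<lambda>n. deviation (tau n) lab S0 \<tau> k P \<mu>) \<longlonglongrightarrow> 0"
proof -
  obtain \<tau> where \<tau>_supp: "\<And>s. s \<in> S0 \<Longrightarrow> set_pmf (\<tau> s) \<subseteq> N"
    and \<tau>_l1: "\<And>s. s \<in> S0 \<Longrightarrow> (\<lambda>n. l1_dist (tau n s) (\<tau> s)) \<longlonglongrightarrow> 0"
    and \<tau>_prob: "\<And>s A. s \<in> S0 \<Longrightarrow> (\<lambda>n. measure (tau n s) A) \<longlonglongrightarrow> measure (\<tau> s) A"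
    using exists_limit_pmfs by blast
  obtain k :: nat and P where P_quotient: "P ` {1..k} = N // lim_equiv"
    and P_partition: "\<forall>j\<in>{1..k}. P j \<noteq> {}"
      "\<forall>j\<in>{1..k}. \<forall>j'\<in>{1..k}. j \<noteq> j' \<longrightarrow> P j \<inter> P j' = {}" "(\<Union>j\<in>{1..k}. P j) = N"
    by (rule enumerate_quotient[OF finite_N equiv_lim_equiv])
  have block_eq: "measure (\<tau> s) (P j) = measure (\<tau> t) (P j)"
    if "s \<in> S0" "t \<in> S0" "j \<in> {1..k}" for s t j
    using that P_quotient by (intro limit_prob_class_eq[OF \<tau>_prob]) auto
  obtain s0 where s0: "s0 \<in> S0" using assms by blast
  obtain \<mu> where \<mu>_supp: "set_pmf \<mu> \<subseteq> {1..k}" and \<mu>: "\<And>j. j \<in> {1..k} \<Longrightarrow> pmf \<mu> j = measure (\<tau> s0) (P j)"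
    using exists_pmf_of_blocks[OF P_partition(2)] \<tau>_supp[OF s0] P_partition(3) by blast
  have "(\<lambda>n. deviation (tau n) lab S0 \<tau> k P \<mu>) \<longlonglongrightarrow> 0"
  proof (rule deviation_tendsto_0[OF finite_S0 assms])
    show "finite (P j)" if "j \<in> {1..k}" for j
      using that P_partition(3) finite_N by (auto intro: finite_subset)
    show "(\<lambda>n. measure (tau n s) (P j)) \<longlonglongrightarrow> pmf \<mu> j" if "s \<in> S0" "j \<in> {1..k}" for s j
      using \<tau>_prob[OF that(1), of "P j"] block_eq[OF that(1) s0 that(2)] \<mu>[OF that(2)] by simp
    show "(\<lambda>n. bisim_dist (tau n) lab u v) \<longlonglongrightarrow> 0" if "j \<in> {1..k}" "u \<in> P j" "v \<in> P j" for j u v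
      using that P_quotient by (intro tendsto_dist_in_class[of "P j"]) auto
  qed (use \<tau>_l1 in blast)
  moreover have "\<forall>s\<in>S0. \<forall>j\<in>{1..k}. measure (\<tau> s) (P j) = pmf \<mu> j"
    using \<mu> block_eq[OF _ s0] by simp
  ultimately show ?thesis
    using P_partition \<mu>_supp by (intro exI[of _ \<tau>] exI[of _ k] exI[of _ P] exI[of _ \<mu>]) simp
qed

end

lemma exists_subseq_convergent_lmc_sequence:
  fixes tau :: "nat \<Rightarrow> 'a \<Rightarrow> 'a pmf"
  assumes "finite S0" and "finite N" and support: "\<And>i s. s \<in> S0 \<Longrightarrow> set_pmf (tau i s) \<subseteq> N"
    and lim: "liminf (\<lambda>i. ereal (Max ((\<lambda>(s, t). bisim_dist (tau i) lab s t) ` (S0 \<times> S0)))) = 0"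
  obtains r where "strict_mono r" and "convergent_lmc_sequence (\<lambda>n. tau (r n)) lab S0 N"
proof -
  define M where "M i = Max ((\<lambda>(s, t). bisim_dist (tau i) lab s t) ` (S0 \<times> S0))" for i
  obtain r0 where r0: "strict_mono r0" and "((\<lambda>i. ereal (M i)) \<circ> r0) \<longlonglongrightarrow> 0"
    using liminf_subseq_lim[of "\<lambda>i. ereal (M i)"] lim by (auto simp: M_def)
  then have M_lim: "(\<lambda>n. M (r0 n)) \<longlonglongrightarrow> 0"
    by (simp add: o_def zero_ereal_def lim_ereal)
  have dist_lim: "(\<lambda>n. bisim_dist (tau (r0 n)) lab s t) \<longlonglongrightarrow> 0" if "s \<in> S0" "t \<in> S0" for s t
  proof (rule tendsto_sandwich[OF _ _ tendsto_const M_lim])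
    show "\<forall>\<^sub>F n in sequentially. 0 \<le> bisim_dist (tau (r0 n)) lab s t"
      by (simp add: bisim_dist_nonneg)
    show "\<forall>\<^sub>F n in sequentially. bisim_dist (tau (r0 n)) lab s t \<le> M (r0 n)"
      unfolding M_def using \<open>finite S0\<close> that by (intro always_eventually allI Max_ge) auto
  qed
  obtain r1 where r1: "strict_mono r1"
    and pmf_conv: "\<forall>i\<in>S0 \<times> N. convergent (\<lambda>n. pmf (tau (r0 (r1 n)) (fst i)) (snd i))"
    using exists_subseq_convergent_family[of "S0 \<times> N" "\<lambda>i n. pmf (tau (r0 n) (fst i)) (snd i)" 1]
      \<open>finite S0\<close> \<open>finite N\<close> by (auto simp: pmf_le_1)
  obtain r2 where r2: "strict_mono r2"
    and dist_conv: "\<forall>i\<in>N \<times> N. convergent (\<lambda>n. bisim_dist (tau (r0 (r1 (r2 n)))) lab (fst i) (snd i))"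
    using exists_subseq_convergent_family[of "N \<times> N" "\<lambda>i n. bisim_dist (tau (r0 (r1 n))) lab (fst i) (snd i)" 1]
      \<open>finite N\<close> by (auto simp: bisim_dist_nonneg bisim_dist_le_1 abs_le_iff)
  show ?thesis
  proof (rule that[of "r0 \<circ> r1 \<circ> r2"])
    show "strict_mono (r0 \<circ> r1 \<circ> r2)" by (intro strict_mono_o r0 r1 r2)
    show "convergent_lmc_sequence (\<lambda>n. tau ((r0 \<circ> r1 \<circ> r2) n)) lab S0 N"
    proof
      show "convergent (\<lambda>n. pmf (tau ((r0 \<circ> r1 \<circ> r2) n) s) x)" if "s \<in> S0" "x \<in> N" for s x
        using convergent_subseq_convergent[OF pmf_conv[rule_format, of "(s, x)"] r2] that
        by (simp add: o_def)
      show "convergent (\<lambda>n. bisim_dist (tau ((r0 \<circ> r1 \<circ> r2) n)) lab u v)" if "u \<in> N" "v \<in> N" for u v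
        using dist_conv[rule_format, of "(u, v)"] that by (simp add: o_def)
      show "(\<lambda>n. bisim_dist (tau ((r0 \<circ> r1 \<circ> r2) n)) lab s t) \<longlonglongrightarrow> 0" if "s \<in> S0" "t \<in> S0" for s t
        using LIMSEQ_subseq_LIMSEQ[OF dist_lim[OF that] strict_mono_o[OF r1 r2]] by (simp add: o_def)
    qed (use assms in auto)
  qed
qed

theorem mainTheorem12:
  fixes tau :: "nat \<Rightarrow> 'a::countable \<Rightarrow> 'a pmf"
    and lab :: "'a \<Rightarrow> 'l::finite"
    and Nb :: "'a \<Rightarrow> 'a set"
    and S0 :: "'a set"
  assumes fin_branch: "\<And>i s. finite (set_pmf (tau i s))"
    and Nb_fin: "\<And>s. finite (Nb s)"
    and Nb_supp: "\<And>i s. set_pmf (tau i s) \<subseteq> Nb s"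
    and S0_fin: "finite S0"
    and S0_ne: "S0 \<noteq> {}"
    and lim: "liminf (\<lambda>i. ereal (Max ((\<lambda>(s, t). bisim_dist (tau i) lab s t) ` (S0 \<times> S0)))) = 0"
  shows "\<exists>(\<tau> :: 'a \<Rightarrow> 'a pmf) (k :: nat) (P :: nat \<Rightarrow> 'a set) (\<mu> :: nat pmf).
           (\<forall>j\<in>{1..k}. P j \<noteq> {}) \<and>
           (\<forall>j\<in>{1..k}. \<forall>j'\<in>{1..k}. j \<noteq> j' \<longrightarrow> P j \<inter> P j' = {}) \<and>
           (\<Union>j\<in>{1..k}. P j) = (\<Union>s\<in>S0. Nb s) \<and>
           set_pmf \<mu> \<subseteq> {1..k} \<and>
           (\<forall>s\<in>S0. \<forall>j\<in>{1..k}. measure_pmf.prob (\<tau> s) (P j) = pmf \<mu> j) \<and>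
           liminf (\<lambda>i. ereal (Max (
               ((\<lambda>s. l1_dist (tau i s) (\<tau> s)) ` S0)
             \<union> ((\<lambda>(s, j). \<bar>measure_pmf.prob (tau i s) (P j) - pmf \<mu> j\<bar>) ` (S0 \<times> {1..k}))
             \<union> ((\<lambda>(j, u, v). bisim_dist (tau i) lab u v) ` (SIGMA j:{1..k}. P j \<times> P j))))) = 0"
proof -
  define N where "N = (\<Union>s\<in>S0. Nb s)"
  have "finite N" using S0_fin Nb_fin by (simp add: N_def)
  moreover have "\<And>i s. s \<in> S0 \<Longrightarrow> set_pmf (tau i s) \<subseteq> N"
    using Nb_supp by (auto simp: N_def)
  ultimately obtain r where r: "strict_mono r" and conv: "convergent_lmc_sequence (\<lambda>n. tau (r n)) lab S0 N"
    by (rule exists_subseq_convergent_lmc_sequence[OF S0_fin _ _ lim])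
  from convergent_lmc_sequence.exists_limit_partition[OF conv S0_ne]
  obtain \<tau> k P \<mu> where partition: "(\<forall>j\<in>{1..k}. P j \<noteq> {}) \<and>
      (\<forall>j\<in>{1..k}. \<forall>j'\<in>{1..k}. j \<noteq> j' \<longrightarrow> P j \<inter> P j' = {}) \<and> (\<Union>j\<in>{1..k}. P j) = N \<and>
      set_pmf \<mu> \<subseteq> {1..k} \<and> (\<forall>s\<in>S0. \<forall>j\<in>{1..k}. measure_pmf.prob (\<tau> s) (P j) = pmf \<mu> j)"
    and deviation_lim: "(\<lambda>n. deviation (tau (r n)) lab S0 \<tau> k P \<mu>) \<longlonglongrightarrow> 0"
    by blast
  have "liminf (\<lambda>i. ereal (deviation (tau i) lab S0 \<tau> k P \<mu>)) = 0"
  proof (rule liminf_eq_0_if_subseq_tendsto_0[OF r _ deviation_lim])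
    obtain s where "s \<in> S0" using S0_ne by blast
    moreover have "\<And>j. j \<in> {1..k} \<Longrightarrow> finite (P j)"
      using partition \<open>finite N\<close> by (auto intro: finite_subset)
    ultimately show "0 \<le> deviation (tau i) lab S0 \<tau> k P \<mu>" for i
      using S0_fin by (intro deviation_nonneg)
  qed
  then show ?thesis
    using partition unfolding deviation_def N_def
    by (intro exI[of _ \<tau>] exI[of _ k] exI[of _ P] exI[of _ \<mu>]) simp
qed

end
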